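(* Let $(A,\mathfrak m)$ be a local integral domain which is not a valuation domain, let $E := A/\mathfrak m$, and let $B := A \ltimes E$ be the trivial ring extension of $A$ by $E$. Let $f : A \to B$ be the ring homomorphism $f(a) = (a,0)$ and let $J := 0 \ltimes E$, a proper ideal of $B$. Then: (1) $J \not\subseteq f(A)$; (2) $f(\mathrm{Reg}(A)) \neq \mathrm{Reg}(B)$; (3) $A$ is not a Prüfer ring; (4) $A \bowtie^f J$ is a Prüfer ring.
   Context: All rings are commutative with identity. For an $A$-module $E$, the trivial ring extension $A\ltimes E$ is the ring $A\times E$ with multiplication $(a,e)(a',e')=(aa',ae'+a'e)$. For a ring homomorphism $f:A\to B$ and an ideal $J$ of $B$, $A \bowtie^f J := \{(a, f(a)+j) : a \in A, j \in J\}$, a subring of $A\times B$. $\mathrm{Reg}(R)$ is the set of regular elements (non-zero-divisors) of $R$. An ideal is regular if it contains a regular element. A ring $R$ is a Prüfer ring if every finitely generated regular ideal of $R$ is invertible. *)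

theory Defs
  imports "HOL-Algebra.Algebra"
begin

definition Reg :: "('a, 'c) ring_scheme \<Rightarrow> 'a set" where
  "Reg R = {x \<in> carrier R. \<forall>y \<in> carrier R. x \<otimes>\<^bsub>R\<^esub> y = \<zero>\<^bsub>R\<^esub> \<longrightarrow> y = \<zero>\<^bsub>R\<^esub>}"

definition regular_ideal :: "('a, 'c) ring_scheme \<Rightarrow> 'a set \<Rightarrow> bool" where
  "regular_ideal R I \<longleftrightarrow> ideal I R \<and> I \<inter> Reg R \<noteq> {}"

definition fin_gen_ideal :: "('a, 'c) ring_scheme \<Rightarrow> 'a set \<Rightarrow> bool" where
  "fin_gen_ideal R I \<longleftrightarrow> (\<exists>S. finite S \<and> S \<subseteq> carrier R \<and> I = Idl\<^bsub>R\<^esub> S)"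

(* An element a/s (s regular) of the total ring of fractions Q(R) lies in
   I^{-1} = {x \<in> Q(R). x I \<subseteq> R} iff for every i in I, a*i/s \<in> R, i.e. a*i = s*r for some r. *)
definition in_inverse :: "('a, 'c) ring_scheme \<Rightarrow> 'a set \<Rightarrow> 'a \<Rightarrow> 'a \<Rightarrow> bool" where
  "in_inverse R I a s \<longleftrightarrow> a \<in> carrier R \<and> s \<in> Reg R \<and>
     (\<forall>i \<in> I. \<exists>r \<in> carrier R. a \<otimes>\<^bsub>R\<^esub> i = s \<otimes>\<^bsub>R\<^esub> r)"

(* I is invertible: I * I^{-1} = R (inside Q(R)).  Since I*I^{-1} \<subseteq> R is an ideal, this
   means 1 = \<Sum>_k i_k * (a_k/s_k) in Q(R) with i_k \<in> I and a_k/s_k \<in> I^{-1};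
   equality of fractions with regular denominators is written out by clearing
   the common denominator \<Prod>_k s_k. *)
definition invertible_ideal :: "('a, 'c) ring_scheme \<Rightarrow> 'a set \<Rightarrow> bool" where
  "invertible_ideal R I \<longleftrightarrow> ideal I R \<and>
     (\<exists>(n::nat) i a s. (\<forall>k<n. i k \<in> I \<and> in_inverse R I (a k) (s k)) \<and>
        (\<Oplus>\<^bsub>R\<^esub> k\<in>{..<n}. i k \<otimes>\<^bsub>R\<^esub> a k \<otimes>\<^bsub>R\<^esub> (\<Otimes>\<^bsub>R\<^esub> j\<in>{..<n} - {k}. s j))
          = (\<Otimes>\<^bsub>R\<^esub> j\<in>{..<n}. s j))"

definition prufer :: "('a, 'c) ring_scheme \<Rightarrow> bool" where
  "prufer R \<longleftrightarrow> (\<forall>I. fin_gen_ideal R I \<and> regular_ideal R I \<longrightarrow> invertible_ideal R I)"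

(* Valuation domain: for x = a/b in the fraction field, x \<in> R or x^{-1} \<in> R *)
definition valuation_domain :: "('a, 'c) ring_scheme \<Rightarrow> bool" where
  "valuation_domain R \<longleftrightarrow> domain R \<and>
     (\<forall>a \<in> carrier R. \<forall>b \<in> carrier R. b \<noteq> \<zero>\<^bsub>R\<^esub> \<longrightarrow> a \<noteq> \<zero>\<^bsub>R\<^esub> \<longrightarrow>
        (\<exists>c \<in> carrier R. a = b \<otimes>\<^bsub>R\<^esub> c) \<or> (\<exists>c \<in> carrier R. b = a \<otimes>\<^bsub>R\<^esub> c))"

definition local_ring :: "('a, 'c) ring_scheme \<Rightarrow> 'a set \<Rightarrow> bool" where
  "local_ring R m \<longleftrightarrow> maximalideal m R \<and> (\<forall>n. maximalideal n R \<longrightarrow> n = m)"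

definition quot_module :: "('a, 'c) ring_scheme \<Rightarrow> 'a set \<Rightarrow> ('a, 'a set) module" where
  "quot_module R I = \<lparr>carrier = carrier (R Quot I), monoid.mult = monoid.mult (R Quot I), one = one (R Quot I),
     ring.zero = ring.zero (R Quot I), ring.add = ring.add (R Quot I),
     module.smult = (\<lambda>a Y. monoid.mult (R Quot I) (a_r_coset R I a) Y)\<rparr>"

definition triv_ext :: "('a, 'c) ring_scheme \<Rightarrow> ('a, 'b, 'd) module_scheme \<Rightarrow> ('a \<times> 'b) ring" where
  "triv_ext R M = \<lparr>carrier = carrier R \<times> carrier M,
     monoid.mult = (\<lambda>(a, e) (a', e'). (a \<otimes>\<^bsub>R\<^esub> a', (a \<odot>\<^bsub>M\<^esub> e') \<oplus>\<^bsub>M\<^esub> (a' \<odot>\<^bsub>M\<^esub> e))),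
     one = (\<one>\<^bsub>R\<^esub>, \<zero>\<^bsub>M\<^esub>),
     ring.zero = (\<zero>\<^bsub>R\<^esub>, \<zero>\<^bsub>M\<^esub>),
     ring.add = (\<lambda>(a, e) (a', e'). (a \<oplus>\<^bsub>R\<^esub> a', e \<oplus>\<^bsub>M\<^esub> e'))\<rparr>"

definition amalg :: "('a, 'c) ring_scheme \<Rightarrow> ('b, 'd) ring_scheme \<Rightarrow> ('a \<Rightarrow> 'b) \<Rightarrow> 'b set \<Rightarrow> ('a \<times> 'b) ring" where
  "amalg R S f J = \<lparr>carrier = {(a, f a \<oplus>\<^bsub>S\<^esub> j) | a j. a \<in> carrier R \<and> j \<in> J},
     monoid.mult = (\<lambda>(a, b) (a', b'). (a \<otimes>\<^bsub>R\<^esub> a', b \<otimes>\<^bsub>S\<^esub> b')),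
     one = (\<one>\<^bsub>R\<^esub>, \<one>\<^bsub>S\<^esub>),
     ring.zero = (\<zero>\<^bsub>R\<^esub>, \<zero>\<^bsub>S\<^esub>),
     ring.add = (\<lambda>(a, b) (a', b'). (a \<oplus>\<^bsub>R\<^esub> a', b \<oplus>\<^bsub>S\<^esub> b'))\<rparr>"

end

theory Submission
  imports Defs
begin

(* (1) and (2) are witnessed by the residue class of 1: (0, 1 + m) lies in J but not in f(A), and a
   nonzero a in m, which exists because A is not a valuation domain, is regular in A while
   (a, 0) (0, 1 + m) = 0 in B.

   (3) In a local ring every invertible ideal I is principal: clearing denominators in I I^-1 = A
   gives elements r_k of i_k I^-1 summing to 1; one of them is a unit, and then I = i_k A. In a local domain, (a, b) = c A forces a | b or b | a, so a local Pruefer domain is a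
   valuation domain.

   (4) An element (a, (a, e)) of A \<bowtie>^f J is a zero divisor if a is in m, killing (0, (0, 1 + m)),
   and a unit otherwise. So a regular ideal contains a unit and is trivially invertible. *)

section \<open>Local rings and regular elements\<close>

lemma (in maximalideal) one_not_mem: "\<one> \<notin> I"
  using one_imp_carrier I_notcarr by blast

lemma (in ring) exists_maximalideal_superset:
  assumes "ideal I R" and "\<one> \<notin> I"
  shows "\<exists>M. maximalideal M R \<and> I \<subseteq> M"
proof -
  define \<A> where "\<A> = {J. ideal J R \<and> I \<subseteq> J \<and> \<one> \<notin> J}"
  have "\<exists>M\<in>\<A>. \<forall>J\<in>\<A>. M \<subseteq> J \<longrightarrow> J = M"
  proof (rule subset_Zorn_nonempty)
    show "\<A> \<noteq> {}"
      using assms unfolding \<A>_def by blast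
  next
    fix \<C> assume "\<C> \<noteq> {}" and chain: "subset.chain \<A> \<C>"
    then have "ideal (\<Union>\<C>) R"
      using chain_Union_is_ideal[of \<C>] chain unfolding pred_on.chain_def \<A>_def by auto
    with \<open>\<C> \<noteq> {}\<close> chain show "\<Union>\<C> \<in> \<A>"
      unfolding pred_on.chain_def \<A>_def by auto
  qed
  then obtain M where M: "M \<in> \<A>" and M_max: "\<And>J. J \<in> \<A> \<Longrightarrow> M \<subseteq> J \<Longrightarrow> J = M"
    by blast
  have "maximalideal M R"
  proof (rule maximalidealI)
    show "ideal M R" and "carrier R \<noteq> M"
      using M unfolding \<A>_def by auto
  next
    fix J assume J: "ideal J R" "M \<subseteq> J" "J \<subseteq> carrier R"
    show "J = M \<or> J = carrier R"
    proof (cases "\<one> \<in> J")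
      case True
      then show ?thesis
        using ideal.one_imp_carrier[OF J(1)] by blast
    next
      case False
      then show ?thesis
        using J M M_max unfolding \<A>_def by blast
    qed
  qed
  then show ?thesis
    using M unfolding \<A>_def by blast
qed

lemma (in cring) local_ring_Units:
  assumes "local_ring R m" and x: "x \<in> carrier R" "x \<notin> m"
  shows "x \<in> Units R"
proof (rule ccontr)
  assume "x \<notin> Units R"
  have "\<one> \<notin> PIdl x"
  proof
    assume "\<one> \<in> PIdl x"
    then obtain y where "y \<in> carrier R" "\<one> = y \<otimes> x"
      unfolding cgenideal_def by blast
    then have "x \<in> Units R"
      using x(1) m_comm[of x y] unfolding Units_def by auto
    with \<open>x \<notin> Units R\<close> show False ..
  qed
  then obtain M where "maximalideal M R" "PIdl x \<subseteq> M"
    using exists_maximalideal_superset cgenideal_ideal[OF x(1)] by blast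
  then show False
    using assms cgenideal_self[OF x(1)] unfolding local_ring_def by blast
qed

lemma (in cring) local_ring_sum_eq_one_Units:
  assumes local: "local_ring R m" and carr: "u \<in> carrier R" "v \<in> carrier R" and sum: "u \<oplus> v = \<one>"
  shows "u \<in> Units R \<or> v \<in> Units R"
proof -
  interpret M: maximalideal m R
    using local unfolding local_ring_def by blast
  have "u \<notin> m \<or> v \<notin> m"
  proof (rule ccontr)
    assume "\<not> (u \<notin> m \<or> v \<notin> m)"
    then have "u \<oplus> v \<in> m"
      using M.a_closed by blast
    then have "\<one> \<in> m"
      by (simp only: sum)
    with M.one_not_mem show False ..
  qed
  then show ?thesis
    using local_ring_Units[OF local] carr by blast
qed

lemma (in domain) local_ring_maximalideal_nonzero:
  assumes local: "local_ring R m" and "\<not> valuation_domain R"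
  shows "\<exists>a\<in>m. a \<noteq> \<zero>"
proof -
  obtain a b where ab: "a \<in> carrier R" "b \<in> carrier R" "a \<noteq> \<zero>"
    and not_div: "\<not> (\<exists>c\<in>carrier R. b = a \<otimes> c)"
    using assms(2) domain_axioms unfolding valuation_domain_def by blast
  have "a \<in> m"
  proof (rule ccontr)
    assume "a \<notin> m"
    then have "a \<in> Units R"
      using local_ring_Units[OF local ab(1)] by blast
    then have "b = a \<otimes> (inv a \<otimes> b)" "inv a \<otimes> b \<in> carrier R"
      using ab(1,2) by (simp_all add: m_assoc[symmetric])
    with not_div show False
      by blast
  qed
  with ab(3) show ?thesis
    by blast
qed

lemma (in ring) ideal_finsum_closed:
  assumes "ideal I R" and "finite F" and "g \<in> F \<rightarrow> I"
  shows "finsum R g F \<in> I"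
  using assms(2,3)
proof (induction F rule: finite_induct)
  case empty
  then show ?case
    using assms(1) by (simp add: additive_subgroup.zero_closed ideal.axioms(1))
next
  case (insert k F)
  then have "finsum R g (insert k F) = g k \<oplus> finsum R g F"
    using ideal.Icarr[OF assms(1)] by (intro finsum_insert) auto
  with insert show ?case
    using assms(1) by (simp add: additive_subgroup.a_closed ideal.axioms(1))
qed

lemma (in ring) Reg_mult:
  assumes "x \<in> Reg R" and "y \<in> Reg R"
  shows "x \<otimes> y \<in> Reg R"
proof -
  have carr: "x \<in> carrier R" "y \<in> carrier R"
    using assms unfolding Reg_def by auto
  have "z = \<zero>" if "z \<in> carrier R" "x \<otimes> y \<otimes> z = \<zero>" for z
  proof -
    have "x \<otimes> (y \<otimes> z) = \<zero>"
      using that carr by (simp add: m_assoc)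
    then have "y \<otimes> z = \<zero>"
      using assms(1) that(1) carr unfolding Reg_def by simp
    then show ?thesis
      using assms(2) that(1) unfolding Reg_def by simp
  qed
  then show ?thesis
    using carr unfolding Reg_def by simp
qed

lemma (in ring) Reg_cancel:
  assumes "x \<in> Reg R" and "y \<in> carrier R" "z \<in> carrier R" and "x \<otimes> y = x \<otimes> z"
  shows "y = z"
proof -
  have "x \<in> carrier R"
    using assms(1) unfolding Reg_def by blast
  then have "x \<otimes> (y \<ominus> z) = \<zero>"
    using assms(2-4) by (simp add: r_distr minus_eq r_minus r_neg)
  then have "y \<ominus> z = \<zero>"
    using assms(1-3) unfolding Reg_def by blast
  then show ?thesis
    using assms(2,3) by (metis r_right_minus_eq)
qed

lemma (in cring) finprod_Reg:
  assumes "finite F" and "s \<in> F \<rightarrow> Reg R"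
  shows "finprod R s F \<in> Reg R"
  using assms
proof (induction F rule: finite_induct)
  case empty
  show ?case
    by (simp add: Reg_def)
next
  case (insert k F)
  have "s \<in> insert k F \<rightarrow> carrier R"
    using insert.prems unfolding Reg_def by blast
  then have "finprod R s (insert k F) = s k \<otimes> finprod R s F"
    using insert.hyps by (intro finprod_insert) auto
  with insert show ?case
    by (simp add: Reg_mult)
qed

lemma (in domain) Reg_eq_nonzero: "Reg R = carrier R - {\<zero>}"
  unfolding Reg_def using integral_iff one_closed one_not_zero by blast

section \<open>Invertible ideals\<close>

(* The library's lemmas on finprod assume a commutative monoid, but the amalgamated ring is
   never shown to be commutative. *)
lemma (in monoid) finprod_singleton_monoid:
  assumes "f a \<in> carrier G"
  shows "finprod G f {a} = f a"
proof -
  have "finprod G f {a} = foldD (carrier G) ((\<otimes>) \<circ> f) \<one> (insert a {})"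
    by (simp add: finprod_def)
  also have "\<dots> = ((\<otimes>) \<circ> f) a (foldD (carrier G) ((\<otimes>) \<circ> f) \<one> {})"
    by (rule LCD.foldD_insert[OF LCD.intro[of "{a}"]]) (use assms in auto)
  also have "\<dots> = f a"
    using assms by simp
  finally show ?thesis .
qed

lemma (in ring) invertible_ideal_if_one_mem:
  assumes "ideal I R" and "\<one> \<in> I"
  shows "invertible_ideal R I"
proof -
  have "in_inverse R I \<one> \<one>"
    unfolding in_inverse_def Reg_def using ideal.Icarr[OF assms(1)] by auto
  moreover have "(\<Oplus>k\<in>{..<1::nat}. \<one> \<otimes> \<one> \<otimes> (\<Otimes>j\<in>{..<1} - {k}. \<one>)) = (\<Otimes>j\<in>{..<1::nat}. \<one>)"
  proof -
    have "(\<Otimes>j\<in>{..<1::nat} - {0}. \<one>) = \<one>"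
      by (simp add: finprod_def lessThan_Suc)
    then have "(\<Oplus>k\<in>{..<1::nat}. \<one> \<otimes> \<one> \<otimes> (\<Otimes>j\<in>{..<1} - {k}. \<one>)) = (\<Oplus>k\<in>{0::nat}. \<one>)"
      by (intro finsum_cong') auto
    also have "\<dots> = \<one>"
      by (simp add: finsum_insert)
    also have "\<dots> = (\<Otimes>j\<in>{..<1::nat}. \<one>)"
      using finprod_singleton_monoid[of "\<lambda>_. \<one>" "0::nat"] by (simp add: lessThan_Suc)
    finally show ?thesis .
  qed
  ultimately show ?thesis
    unfolding invertible_ideal_def using assms
    by (intro conjI exI[of _ "1::nat"] exI[of _ "\<lambda>_. \<one>"]) auto
qed

lemma prufer_if_Reg_right_invertible:
  assumes "\<And>x. x \<in> Reg R \<Longrightarrow> \<exists>y\<in>carrier R. x \<otimes>\<^bsub>R\<^esub> y = \<one>\<^bsub>R\<^esub>"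
  shows "prufer R"
  unfolding prufer_def
proof (intro allI impI)
  fix I assume "fin_gen_ideal R I \<and> regular_ideal R I"
  then obtain x where I: "ideal I R" and x: "x \<in> I" "x \<in> Reg R"
    unfolding regular_ideal_def by blast
  then obtain y where "y \<in> carrier R" "x \<otimes>\<^bsub>R\<^esub> y = \<one>\<^bsub>R\<^esub>"
    using assms by blast
  then have "\<one>\<^bsub>R\<^esub> \<in> I"
    using ideal.I_r_closed[OF I x(1)] by metis
  then show "invertible_ideal R I"
    using ring.invertible_ideal_if_one_mem[OF ideal.axioms(2)[OF I] I] by blast
qed

(* Clearing the common denominator of the equation defining invertibility: r k is the
   element i k * (\<alpha> k / s k) of R. *)
lemma (in cring) invertible_ideal_partition_of_unity:
  assumes "invertible_ideal R I"
  obtains n :: nat and i \<alpha> s r where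
    "\<And>k. k < n \<Longrightarrow> i k \<in> I \<and> in_inverse R I (\<alpha> k) (s k) \<and> r k \<in> carrier R \<and> \<alpha> k \<otimes> i k = s k \<otimes> r k"
    and "(\<Oplus>k\<in>{..<n}. r k) = \<one>"
proof -
  have I: "ideal I R"
    using assms unfolding invertible_ideal_def by blast
  from assms obtain n :: nat and i \<alpha> s where inv: "\<forall>k<n. i k \<in> I \<and> in_inverse R I (\<alpha> k) (s k)"
    and eq: "(\<Oplus>k\<in>{..<n}. i k \<otimes> \<alpha> k \<otimes> (\<Otimes>j\<in>{..<n} - {k}. s j)) = (\<Otimes>j\<in>{..<n}. s j)"
    unfolding invertible_ideal_def by blast
  have "\<forall>k<n. \<exists>r\<in>carrier R. \<alpha> k \<otimes> i k = s k \<otimes> r"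
    using inv unfolding in_inverse_def by blast
  then obtain r where r: "\<And>k. k < n \<Longrightarrow> r k \<in> carrier R \<and> \<alpha> k \<otimes> i k = s k \<otimes> r k"
    by metis
  define P where "P = (\<Otimes>j\<in>{..<n}. s j)"
  have s_Reg: "s \<in> {..<n} \<rightarrow> Reg R"
    using inv unfolding in_inverse_def by blast
  then have s_carr: "s \<in> {..<n} \<rightarrow> carrier R"
    unfolding Reg_def by blast
  have P_Reg: "P \<in> Reg R"
    unfolding P_def using finprod_Reg[OF _ s_Reg] by simp
  then have P_carr: "P \<in> carrier R"
    unfolding Reg_def by blast
  have r_carr: "r \<in> {..<n} \<rightarrow> carrier R"
    using r by blast
  have summand_eq: "i k \<otimes> \<alpha> k \<otimes> (\<Otimes>j\<in>{..<n} - {k}. s j) = r k \<otimes> P" if k: "k < n" for k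
  proof -
    have carr: "i k \<in> carrier R" "\<alpha> k \<in> carrier R" "s k \<in> carrier R" "r k \<in> carrier R"
      using k inv r s_carr ideal.Icarr[OF I] unfolding in_inverse_def by auto
    have Q_carr: "(\<Otimes>j\<in>{..<n} - {k}. s j) \<in> carrier R"
      using s_carr by (intro finprod_closed) auto
    have "P = (\<Otimes>j\<in>insert k ({..<n} - {k}). s j)"
      unfolding P_def using k by (simp add: insert_absorb)
    also have "\<dots> = s k \<otimes> (\<Otimes>j\<in>{..<n} - {k}. s j)"
      using s_carr k by (intro finprod_insert) auto
    finally have "P = s k \<otimes> (\<Otimes>j\<in>{..<n} - {k}. s j)" .
    moreover have "i k \<otimes> \<alpha> k = s k \<otimes> r k"
      using r[OF k] carr by (simp add: m_comm)
    ultimately show ?thesis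
      using carr Q_carr by (simp add: m_assoc m_lcomm)
  qed
  have "\<one> \<otimes> P = (\<Oplus>k\<in>{..<n}. i k \<otimes> \<alpha> k \<otimes> (\<Otimes>j\<in>{..<n} - {k}. s j))"
    using eq P_carr by (simp add: P_def)
  also have "\<dots> = (\<Oplus>k\<in>{..<n}. r k \<otimes> P)"
    using summand_eq r_carr P_carr by (intro finsum_cong') auto
  also have "\<dots> = (\<Oplus>k\<in>{..<n}. r k) \<otimes> P"
    using finsum_ldistr[of "{..<n}" P r] r_carr P_carr by simp
  finally have "P \<otimes> \<one> = P \<otimes> (\<Oplus>k\<in>{..<n}. r k)"
    using P_carr r_carr by (simp add: m_comm)
  then have sum_r: "\<one> = (\<Oplus>k\<in>{..<n}. r k)"
    by (rule Reg_cancel[OF P_Reg one_closed finsum_closed[OF r_carr]])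
  show thesis
  proof (rule that)
    fix k assume "k < n"
    then show "i k \<in> I \<and> in_inverse R I (\<alpha> k) (s k) \<and> r k \<in> carrier R \<and> \<alpha> k \<otimes> i k = s k \<otimes> r k"
      using inv r by blast
  qed (rule sum_r[symmetric])
qed

lemma (in cring) in_inverse_Units_imp_subset_cgenideal:
  assumes I: "ideal I R" and i: "i \<in> I" and inv: "in_inverse R I \<alpha> s"
    and u: "u \<in> Units R" and eq: "\<alpha> \<otimes> i = s \<otimes> u"
  shows "I \<subseteq> PIdl i"
proof
  fix x assume x: "x \<in> I"
  obtain y where y: "y \<in> carrier R" "\<alpha> \<otimes> x = s \<otimes> y"
    using inv x unfolding in_inverse_def by blast
  have carr: "x \<in> carrier R" "i \<in> carrier R" "\<alpha> \<in> carrier R" "s \<in> carrier R" "u \<in> carrier R"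
    using x i inv u ideal.Icarr[OF I] unfolding in_inverse_def Reg_def by auto
  have "s \<otimes> (u \<otimes> x) = (\<alpha> \<otimes> i) \<otimes> x"
    using carr eq by (simp add: m_assoc)
  also have "\<dots> = i \<otimes> (\<alpha> \<otimes> x)"
    using carr by (simp add: m_ac)
  also have "\<dots> = s \<otimes> (i \<otimes> y)"
    using carr y by (simp add: m_lcomm)
  finally have "s \<otimes> (u \<otimes> x) = s \<otimes> (i \<otimes> y)" .
  then have "u \<otimes> x = i \<otimes> y"
    using Reg_cancel[of s "u \<otimes> x" "i \<otimes> y"] inv carr y unfolding in_inverse_def by blast
  then have "x = (inv u \<otimes> y) \<otimes> i"
    using carr u y by (metis Units_inv_closed Units_l_inv l_one m_assoc m_comm)
  then show "x \<in> PIdl i"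
    unfolding cgenideal_def using u y by blast
qed

lemma (in cring) invertible_ideal_local_principal:
  assumes local: "local_ring R m" and I_inv: "invertible_ideal R I"
  shows "\<exists>c\<in>I. I = PIdl c"
proof -
  have I: "ideal I R"
    using I_inv unfolding invertible_ideal_def by blast
  interpret M: maximalideal m R
    using local unfolding local_ring_def by blast
  obtain n :: nat and i \<alpha> s r where
    inv: "\<And>k. k < n \<Longrightarrow> i k \<in> I \<and> in_inverse R I (\<alpha> k) (s k) \<and> r k \<in> carrier R \<and> \<alpha> k \<otimes> i k = s k \<otimes> r k"
    and sum_r: "(\<Oplus>k\<in>{..<n}. r k) = \<one>"
    using invertible_ideal_partition_of_unity[OF I_inv] by blast
  have "\<not> r \<in> {..<n} \<rightarrow> m"
    using ideal_finsum_closed[OF M.is_ideal, of "{..<n}" r] sum_r M.one_not_mem by auto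
  then obtain k where k: "k < n" "r k \<notin> m"
    by blast
  then have "r k \<in> Units R"
    using local_ring_Units[OF local] inv by blast
  then have "I \<subseteq> PIdl (i k)"
    using in_inverse_Units_imp_subset_cgenideal[OF I, of "i k" "\<alpha> k" "s k" "r k"] inv[OF k(1)]
    by blast
  moreover have "PIdl (i k) \<subseteq> I"
    using cgenideal_minimal[OF I] inv[OF k(1)] by blast
  ultimately show ?thesis
    using inv[OF k(1)] by blast
qed

lemma (in cring) divides_if_Units_cofactor:
  assumes "a = c \<otimes> x" and "b = c \<otimes> y" and x: "x \<in> Units R" and carr: "c \<in> carrier R" "y \<in> carrier R"
  shows "a divides b"
proof -
  have x_carr: "x \<in> carrier R" "inv x \<in> carrier R"
    using x by auto
  have "a \<otimes> (inv x \<otimes> y) = c \<otimes> ((x \<otimes> inv x) \<otimes> y)"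
    using assms(1) x_carr carr by (simp add: m_assoc)
  also have "\<dots> = b"
    using assms(2) x carr by simp
  finally show ?thesis
    unfolding factor_def using x carr by blast
qed

lemma (in cring) genideal_pair_subset_set_add:
  assumes "a \<in> carrier R" and "b \<in> carrier R"
  shows "Idl {a, b} \<subseteq> PIdl a <+>\<^bsub>R\<^esub> PIdl b"
proof -
  have "Idl {a, b} \<subseteq> Idl (PIdl a \<union> PIdl b)"
    using assms cgenideal_self cgenideal_ideal[THEN ideal.Icarr]
    by (intro subset_Idl_subset) auto
  also have "\<dots> = PIdl a <+>\<^bsub>R\<^esub> PIdl b"
    using assms by (simp add: union_genideal cgenideal_ideal)
  finally show ?thesis .
qed

lemma (in domain) local_ring_divides_if_principal_pair:
  assumes local: "local_ring R m" and carr: "a \<in> carrier R" "b \<in> carrier R" "c \<in> carrier R"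
    and "a \<in> PIdl c" and "b \<in> PIdl c" and "c \<in> PIdl a <+>\<^bsub>R\<^esub> PIdl b"
  shows "a divides b \<or> b divides a"
proof -
  obtain x y where xy: "x \<in> carrier R" "y \<in> carrier R" "a = x \<otimes> c" "b = y \<otimes> c"
    using assms(5,6) unfolding cgenideal_def by blast
  obtain p q where pq: "p \<in> carrier R" "q \<in> carrier R" "c = p \<otimes> a \<oplus> q \<otimes> b"
    using assms(7) unfolding set_add_def' cgenideal_def by blast
  show ?thesis
  proof (cases "c = \<zero>")
    case True
    then have "a = b \<otimes> \<zero>"
      using xy(1,3) carr(2) by simp
    then show ?thesis
      unfolding factor_def using zero_closed by blast
  next
    case False
    have "c \<otimes> (x \<otimes> p \<oplus> y \<otimes> q) = p \<otimes> (x \<otimes> c) \<oplus> q \<otimes> (y \<otimes> c)"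
      using pq(1,2) xy(1,2) carr(3) by (simp add: r_distr m_ac)
    also have "\<dots> = c"
      by (simp only: xy(3,4)[symmetric] pq(3)[symmetric])
    also have "\<dots> = c \<otimes> \<one>"
      using carr(3) by simp
    finally have sum: "x \<otimes> p \<oplus> y \<otimes> q = \<one>"
      using m_lcancel[OF False carr(3)] pq(1,2) xy(1,2) by simp
    have "x \<otimes> p \<in> Units R \<or> y \<otimes> q \<in> Units R"
      using local_ring_sum_eq_one_Units[OF local _ _ sum] pq(1,2) xy(1,2) by simp
    then have "x \<in> Units R \<or> y \<in> Units R"
      using unit_factor pq(1,2) xy(1,2) by blast
    moreover have "a = c \<otimes> x" "b = c \<otimes> y"
      using xy carr(3) by (simp_all add: m_comm)
    ultimately show ?thesis
      using divides_if_Units_cofactor xy carr by blast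
  qed
qed

lemma (in domain) local_prufer_imp_valuation_domain:
  assumes local: "local_ring R m" and "prufer R"
  shows "valuation_domain R"
  unfolding valuation_domain_def
proof (intro conjI domain_axioms ballI impI)
  fix a b assume carr: "a \<in> carrier R" "b \<in> carrier R" and nonzero: "b \<noteq> \<zero>" "a \<noteq> \<zero>"
  define I where "I = Idl {a, b}"
  have "ideal I R"
    unfolding I_def using carr by (intro genideal_ideal) auto
  have "{a, b} \<subseteq> I"
    unfolding I_def using carr by (intro genideal_self) auto
  then have "a \<in> I" "b \<in> I"
    by auto
  moreover have "fin_gen_ideal R I"
    unfolding fin_gen_ideal_def I_def using carr by (intro exI[of _ "{a, b}"]) auto
  moreover have "a \<in> Reg R"
    using carr nonzero by (simp add: Reg_eq_nonzero)
  ultimately have "fin_gen_ideal R I \<and> regular_ideal R I"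
    using \<open>ideal I R\<close> unfolding regular_ideal_def by blast
  then have "invertible_ideal R I"
    using \<open>prufer R\<close> unfolding prufer_def by blast
  then obtain c where c: "c \<in> I" "I = PIdl c"
    using invertible_ideal_local_principal[OF local] by blast
  have "c \<in> carrier R"
    using c(1) ideal.Icarr[OF \<open>ideal I R\<close>] by blast
  moreover have "a \<in> PIdl c" "b \<in> PIdl c"
    using c(2) \<open>a \<in> I\<close> \<open>b \<in> I\<close> by simp_all
  moreover have "c \<in> PIdl a <+>\<^bsub>R\<^esub> PIdl b"
    using c(1) genideal_pair_subset_set_add[OF carr] unfolding I_def by blast
  ultimately have "a divides b \<or> b divides a"
    by (rule local_ring_divides_if_principal_pair[OF local carr])
  then show "(\<exists>c\<in>carrier R. a = b \<otimes> c) \<or> (\<exists>c\<in>carrier R. b = a \<otimes> c)"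
    unfolding factor_def by blast
qed

section \<open>Amalgamation along the trivial extension by the residue field\<close>

lemma triv_ext_simps:
  "carrier (triv_ext R M) = carrier R \<times> carrier M"
  "\<one>\<^bsub>triv_ext R M\<^esub> = (\<one>\<^bsub>R\<^esub>, \<zero>\<^bsub>M\<^esub>)"
  "\<zero>\<^bsub>triv_ext R M\<^esub> = (\<zero>\<^bsub>R\<^esub>, \<zero>\<^bsub>M\<^esub>)"
  "(a, e) \<otimes>\<^bsub>triv_ext R M\<^esub> (a', e') = (a \<otimes>\<^bsub>R\<^esub> a', (a \<odot>\<^bsub>M\<^esub> e') \<oplus>\<^bsub>M\<^esub> (a' \<odot>\<^bsub>M\<^esub> e))"
  "(a, e) \<oplus>\<^bsub>triv_ext R M\<^esub> (a', e') = (a \<oplus>\<^bsub>R\<^esub> a', e \<oplus>\<^bsub>M\<^esub> e')"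
  unfolding triv_ext_def by simp_all

lemma amalg_simps:
  "carrier (amalg R S f J) = {(a, f a \<oplus>\<^bsub>S\<^esub> j) | a j. a \<in> carrier R \<and> j \<in> J}"
  "\<one>\<^bsub>amalg R S f J\<^esub> = (\<one>\<^bsub>R\<^esub>, \<one>\<^bsub>S\<^esub>)"
  "\<zero>\<^bsub>amalg R S f J\<^esub> = (\<zero>\<^bsub>R\<^esub>, \<zero>\<^bsub>S\<^esub>)"
  "(a, b) \<otimes>\<^bsub>amalg R S f J\<^esub> (a', b') = (a \<otimes>\<^bsub>R\<^esub> a', b \<otimes>\<^bsub>S\<^esub> b')"
  unfolding amalg_def by simp_all

(* The ring A \<bowtie>^f J of the theorem, with B = A \<ltimes> A/m, f a = (a, 0) and J = 0 \<ltimes> A/m. *)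
abbreviation residue_amalg :: "('a, 'c) ring_scheme \<Rightarrow> 'a set \<Rightarrow> ('a \<times> 'a \<times> 'a set) ring" where
  "residue_amalg R m \<equiv> amalg R (triv_ext R (quot_module R m)) (\<lambda>a. (a, \<zero>\<^bsub>quot_module R m\<^esub>))
     ({\<zero>\<^bsub>R\<^esub>} \<times> carrier (quot_module R m))"

context ideal
begin

lemma quot_module_carrier: "carrier (quot_module R I) = {I +> t | t. t \<in> carrier R}"
  unfolding quot_module_def FactRing_def by (auto simp: A_RCOSETS_def')

lemma quot_module_zero: "\<zero>\<^bsub>quot_module R I\<^esub> = I"
  unfolding quot_module_def FactRing_def by simp

lemma quot_module_add:
  "t \<in> carrier R \<Longrightarrow> u \<in> carrier R \<Longrightarrow> (I +> t) \<oplus>\<^bsub>quot_module R I\<^esub> (I +> u) = I +> (t \<oplus> u)"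
  unfolding quot_module_def FactRing_def by (simp add: a_rcos_sum)

lemma quot_module_smult:
  "a \<in> carrier R \<Longrightarrow> t \<in> carrier R \<Longrightarrow> a \<odot>\<^bsub>quot_module R I\<^esub> (I +> t) = I +> (a \<otimes> t)"
  unfolding quot_module_def FactRing_def by (simp add: rcoset_mult_add)

lemma rcos_eq_self_iff: "t \<in> carrier R \<Longrightarrow> I +> t = I \<longleftrightarrow> t \<in> I"
  using a_rcos_zero[OF is_ideal] rcos_const_imp_mem by blast

lemma rcos_zero: "I +> \<zero> = I"
  using rcos_eq_self_iff additive_subgroup.zero_closed[OF ideal.axioms(1)[OF is_ideal]] by simp

lemma triv_ext_quot_module_zero_divisor:
  assumes "\<one> \<notin> I" and "a \<in> I"
  shows "(a, I) \<notin> Reg (triv_ext R (quot_module R I))"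
proof -
  let ?E = "quot_module R I"
  have a: "a \<in> carrier R"
    using assms(2) Icarr by blast
  have "a \<odot>\<^bsub>?E\<^esub> (I +> \<one>) = I"
    using quot_module_smult[of a \<one>] a assms(2) rcos_eq_self_iff by simp
  moreover have "\<zero> \<odot>\<^bsub>?E\<^esub> I = I"
    using quot_module_smult[of \<zero> \<zero>] rcos_zero by simp
  moreover have "I \<oplus>\<^bsub>?E\<^esub> I = I"
    using quot_module_add[of \<zero> \<zero>] rcos_zero by simp
  ultimately have "(a, I) \<otimes>\<^bsub>triv_ext R ?E\<^esub> (\<zero>, I +> \<one>) = \<zero>\<^bsub>triv_ext R ?E\<^esub>"
    using a by (simp add: triv_ext_simps quot_module_zero)
  moreover have "(\<zero>, I +> \<one>) \<in> carrier (triv_ext R ?E)"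
    by (auto simp: triv_ext_simps quot_module_carrier)
  moreover have "(\<zero>, I +> \<one>) \<noteq> \<zero>\<^bsub>triv_ext R ?E\<^esub>"
    using assms(1) rcos_eq_self_iff by (simp add: triv_ext_simps quot_module_zero)
  ultimately show ?thesis
    unfolding Reg_def by blast
qed

lemma residue_amalg_carrier:
  "carrier (residue_amalg R I) = {(a, (a, I +> t)) | a t. a \<in> carrier R \<and> t \<in> carrier R}"
proof -
  have add_eq: "(a, I) \<oplus>\<^bsub>triv_ext R (quot_module R I)\<^esub> (\<zero>, I +> t) = (a, I +> t)"
    if "a \<in> carrier R" "t \<in> carrier R" for a t
    using that quot_module_add[of \<zero> t] rcos_zero by (simp add: triv_ext_simps)
  then show ?thesis
    by (auto simp: amalg_simps quot_module_zero quot_module_carrier) (metis add_eq)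
qed

lemma residue_amalg_mult:
  assumes "a \<in> carrier R" "t \<in> carrier R" "b \<in> carrier R" "u \<in> carrier R"
  shows "(a, (a, I +> t)) \<otimes>\<^bsub>residue_amalg R I\<^esub> (b, (b, I +> u))
       = (a \<otimes> b, (a \<otimes> b, I +> (a \<otimes> u \<oplus> b \<otimes> t)))"
  using assms by (simp add: amalg_simps triv_ext_simps quot_module_smult quot_module_add)

lemma residue_amalg_zero_divisor:
  assumes "\<one> \<notin> I" and "a \<in> I" and "t \<in> carrier R"
  shows "(a, (a, I +> t)) \<notin> Reg (residue_amalg R I)"
proof -
  have a: "a \<in> carrier R"
    using assms(2) Icarr by blast
  have "(a, (a, I +> t)) \<otimes>\<^bsub>residue_amalg R I\<^esub> (\<zero>, (\<zero>, I +> \<one>)) = (\<zero>, (\<zero>, I +> a))"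
    using residue_amalg_mult[of a t \<zero> \<one>] a assms(3) by simp
  also have "\<dots> = \<zero>\<^bsub>residue_amalg R I\<^esub>"
    using assms(2) a rcos_eq_self_iff by (simp add: amalg_simps triv_ext_simps quot_module_zero)
  finally have "(a, (a, I +> t)) \<otimes>\<^bsub>residue_amalg R I\<^esub> (\<zero>, (\<zero>, I +> \<one>)) = \<zero>\<^bsub>residue_amalg R I\<^esub>" .
  moreover have "(\<zero>, (\<zero>, I +> \<one>)) \<in> carrier (residue_amalg R I)"
    unfolding residue_amalg_carrier by blast
  moreover have "(\<zero>, (\<zero>, I +> \<one>)) \<noteq> \<zero>\<^bsub>residue_amalg R I\<^esub>"
    using assms(1) rcos_eq_self_iff by (simp add: amalg_simps triv_ext_simps quot_module_zero)
  ultimately show ?thesis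
    unfolding Reg_def by blast
qed

(* In A \<ltimes> E the inverse of (a, e) is (a^-1, - a^-2 e). *)
lemma residue_amalg_right_inverse:
  assumes a: "a \<in> Units R" and t: "t \<in> carrier R"
  shows "(a, (a, I +> t)) \<otimes>\<^bsub>residue_amalg R I\<^esub> (inv a, (inv a, I +> \<ominus> (inv a \<otimes> inv a \<otimes> t)))
       = \<one>\<^bsub>residue_amalg R I\<^esub>"
proof -
  have carr: "a \<in> carrier R" "inv a \<in> carrier R"
    using a by auto
  have "a \<otimes> (inv a \<otimes> inv a \<otimes> t) = (a \<otimes> inv a) \<otimes> (inv a \<otimes> t)"
    using carr t by (simp add: m_assoc)
  then have "a \<otimes> (inv a \<otimes> inv a \<otimes> t) = inv a \<otimes> t"
    using a carr t by simp
  then have "a \<otimes> \<ominus> (inv a \<otimes> inv a \<otimes> t) \<oplus> inv a \<otimes> t = \<zero>"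
    using carr t by (simp add: r_minus l_neg)
  then show ?thesis
    using residue_amalg_mult[of a t "inv a" "\<ominus> (inv a \<otimes> inv a \<otimes> t)"] a carr t rcos_zero
    by (simp add: amalg_simps triv_ext_simps quot_module_zero)
qed

end

lemma (in cring) residue_amalg_prufer:
  assumes local: "local_ring R m"
  shows "prufer (residue_amalg R m)"
proof (rule prufer_if_Reg_right_invertible)
  interpret M: maximalideal m R
    using local unfolding local_ring_def by blast
  fix x assume x: "x \<in> Reg (residue_amalg R m)"
  then obtain a t where at: "a \<in> carrier R" "t \<in> carrier R" "x = (a, (a, m +> t))"
    unfolding Reg_def M.residue_amalg_carrier by blast
  then have "a \<notin> m"
    using M.residue_amalg_zero_divisor[OF M.one_not_mem] x by blast
  then have a: "a \<in> Units R"
    using local_ring_Units[OF local] at(1) by blast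
  let ?y = "(inv a, (inv a, m +> \<ominus> (inv a \<otimes> inv a \<otimes> t)))"
  have "inv a \<in> carrier R" "\<ominus> (inv a \<otimes> inv a \<otimes> t) \<in> carrier R"
    using a at(2) by auto
  then have "?y \<in> carrier (residue_amalg R m)"
    unfolding M.residue_amalg_carrier by blast
  moreover have "x \<otimes>\<^bsub>residue_amalg R m\<^esub> ?y = \<one>\<^bsub>residue_amalg R m\<^esub>"
    using M.residue_amalg_right_inverse[OF a at(2)] at(3) by simp
  ultimately show "\<exists>y\<in>carrier (residue_amalg R m). x \<otimes>\<^bsub>residue_amalg R m\<^esub> y = \<one>\<^bsub>residue_amalg R m\<^esub>"
    by blast
qed

theorem mainTheorem7:
  fixes A :: "('a, 'c) ring_scheme" and m :: "'a set"
  assumes "domain A" and "local_ring A m" and "\<not> valuation_domain A"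
  defines "B \<equiv> triv_ext A (quot_module A m)"
      and "f \<equiv> (\<lambda>a. (a, \<zero>\<^bsub>quot_module A m\<^esub>))"
      and "J \<equiv> {\<zero>\<^bsub>A\<^esub>} \<times> carrier (quot_module A m)"
  shows "(\<not> J \<subseteq> f ` carrier A) \<and> f ` Reg A \<noteq> Reg B \<and> \<not> prufer A \<and> prufer (amalg A B f J)"
proof -
  interpret A: domain A by fact
  interpret M: maximalideal m A
    using assms(2) unfolding local_ring_def by blast
  have "(\<zero>\<^bsub>A\<^esub>, m +>\<^bsub>A\<^esub> \<one>\<^bsub>A\<^esub>) \<in> J - f ` carrier A"
    using M.one_not_mem M.rcos_eq_self_iff
    unfolding J_def f_def M.quot_module_carrier M.quot_module_zero by auto
  moreover obtain a where a: "a \<in> m" "a \<noteq> \<zero>\<^bsub>A\<^esub>"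
    using A.local_ring_maximalideal_nonzero[OF assms(2,3)] by blast
  then have "f a \<in> f ` Reg A - Reg B"
    using M.triv_ext_quot_module_zero_divisor[OF M.one_not_mem a(1)] A.Reg_eq_nonzero
    unfolding B_def f_def M.quot_module_zero by auto
  moreover have "\<not> prufer A"
    using A.local_prufer_imp_valuation_domain assms(2,3) by blast
  moreover have "prufer (amalg A B f J)"
    using A.residue_amalg_prufer[OF assms(2)] unfolding B_def f_def J_def .
  ultimately show ?thesis
    by blast
qed

end
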